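(* Let $H$ be a finite-dimensional complex Hilbert space, $A$ a unital (real or complex) $*$-subalgebra of $\mathrm{End}_{\mathbb{C}}(H)$, $D$ a selfadjoint operator on $H$, and $J$ an antilinear isometry of $H$ with $J^2=\varepsilon 1$, $JD=\varepsilon' DJ$ for some $\varepsilon,\varepsilon'\in\{\pm1\}$, such that $[a,JbJ^{-1}]=0$ for all $a,b\in A$. With $D_0$ and $D_2$ as defined in the context, $D_0+D_2\in\Omega^1_D(A)$.
   Context: Let $A_{\mathbb{C}}$ be the complex $*$-subalgebra of $\mathrm{End}_{\mathbb{C}}(H)$ generated by $A$; write $A_{\mathbb{C}}\cong\bigoplus_{i=1}^N M_{n_i}(\mathbb{C})$ and let $P_1,\dots,P_N$ be the (orthogonal projections representing the) units of the summands, so $\sum_iP_i=1$. Set $Q_j=JP_jJ^{-1}$ and $D_{ij,kl}=P_iQ_jDP_kQ_l$. Define $D_0=\sum_{i,j,k:\,i\neq k}D_{ij,kj}$, $D_1=\sum_{i,j,l:\,j\neq l}D_{ij,il}$, $D_2=\sum_{i,j,k,l:\,i\neq k,\,j\neq l}D_{ij,kl}$, $D_R=\sum_{i,j}D_{ij,ij}$, so $D=D_0+D_1+D_2+D_R$. $\Omega^1_D(A)$ is the complex linear span in $\mathrm{End}_{\mathbb{C}}(H)$ of the operators $a[D,b]$, $a,b\in A$. *)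

theory Defs
  imports "HOL-Analysis.Analysis"
begin

text \<open>H is modelled as the finite-dimensional complex Hilbert space complex^'n
  (standard inner product; the norm on vectors is the Euclidean one).
  Operators in End_C(H) are complex 'n x 'n matrices.\<close>

type_synonym 'n cop = "complex^'n^'n"

definition adj :: "'n::finite cop \<Rightarrow> 'n cop" where
  "adj M = (\<chi> i j. cnj (M $ j $ i))"

definition csc :: "complex \<Rightarrow> 'n::finite cop \<Rightarrow> 'n cop" where
  "csc c M = (\<chi> i j. c * M $ i $ j)"

definition real_star_subalg :: "'n::finite cop set \<Rightarrow> bool" where
  "real_star_subalg S \<longleftrightarrow> mat 1 \<in> S \<and>
     (\<forall>a\<in>S. \<forall>b\<in>S. a + b \<in> S \<and> a ** b \<in> S) \<and>
     (\<forall>a\<in>S. \<forall>r::real. csc (complex_of_real r) a \<in> S) \<and>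
     (\<forall>a\<in>S. adj a \<in> S)"

definition complex_star_subalg :: "'n::finite cop set \<Rightarrow> bool" where
  "complex_star_subalg S \<longleftrightarrow> 0 \<in> S \<and>
     (\<forall>a\<in>S. \<forall>b\<in>S. a + b \<in> S \<and> a ** b \<in> S) \<and>
     (\<forall>a\<in>S. \<forall>c::complex. csc c a \<in> S) \<and>
     (\<forall>a\<in>S. adj a \<in> S)"

definition AC :: "'n::finite cop set \<Rightarrow> 'n cop set" where
  "AC A = \<Inter> {S. complex_star_subalg S \<and> A \<subseteq> S}"

definition central_proj :: "'n::finite cop set \<Rightarrow> 'n cop \<Rightarrow> bool" where
  "central_proj B P \<longleftrightarrow> P \<in> B \<and> P ** P = P \<and> adj P = P \<and> (\<forall>a\<in>B. P ** a = a ** P)"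

text \<open>The units P_i of the simple summands of A_C = the minimal (nonzero)
  central projections of A_C.\<close>
definition summand_units :: "'n::finite cop set \<Rightarrow> 'n cop set" where
  "summand_units A = {P. central_proj (AC A) P \<and> P \<noteq> 0 \<and>
      (\<forall>Q. central_proj (AC A) Q \<and> Q ** P = Q \<longrightarrow> Q = 0 \<or> Q = P)}"

definition antilinear_isometry :: "(complex^'n::finite \<Rightarrow> complex^'n) \<Rightarrow> bool" where
  "antilinear_isometry J \<longleftrightarrow> (\<forall>x y. J (x + y) = J x + J y) \<and>
     (\<forall>c x. J (c *s x) = cnj c *s J x) \<and> (\<forall>x. norm (J x) = norm x)"

definition conjJ :: "(complex^'n::finite \<Rightarrow> complex^'n) \<Rightarrow> 'n cop \<Rightarrow> 'n cop" where
  "conjJ J M = matrix (\<lambda>x. J (M *v inv J x))"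

definition Dblock :: "(complex^'n::finite \<Rightarrow> complex^'n) \<Rightarrow> 'n cop \<Rightarrow> 'n cop \<Rightarrow> 'n cop \<Rightarrow> 'n cop \<Rightarrow> 'n cop \<Rightarrow> 'n cop" where
  "Dblock J D PPi PPj PPk PPl = PPi ** conjJ J PPj ** D ** PPk ** conjJ J PPl"

definition D0 :: "'n::finite cop set \<Rightarrow> (complex^'n \<Rightarrow> complex^'n) \<Rightarrow> 'n cop \<Rightarrow> 'n cop" where
  "D0 A J D = (\<Sum>PPi\<in>summand_units A. \<Sum>PPj\<in>summand_units A. \<Sum>PPk\<in>summand_units A - {PPi}.
        Dblock J D PPi PPj PPk PPj)"

definition D2 :: "'n::finite cop set \<Rightarrow> (complex^'n \<Rightarrow> complex^'n) \<Rightarrow> 'n cop \<Rightarrow> 'n cop" where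
  "D2 A J D = (\<Sum>PPi\<in>summand_units A. \<Sum>PPj\<in>summand_units A. \<Sum>PPk\<in>summand_units A - {PPi}.
        \<Sum>PPl\<in>summand_units A - {PPj}. Dblock J D PPi PPj PPk PPl)"

definition Omega1 :: "'n::finite cop \<Rightarrow> 'n cop set \<Rightarrow> 'n cop set" where
  "Omega1 D A = {\<Sum>i<m. csc (c i) (a i ** (D ** b i - b i ** D)) | (m::nat) c a b.
                   \<forall>i<m. a i \<in> A \<and> b i \<in> A}"

end

theory Submission
  imports Defs
begin

text \<open>\<open>D\<^sub>0 + D\<^sub>2\<close> collects all blocks \<open>P\<^sub>i Q\<^sub>j D P\<^sub>k Q\<^sub>l\<close> with \<open>i \<noteq> k\<close> (\<open>l = j\<close> and \<open>l \<noteq> j\<close>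
  respectively). The J-conjugates \<open>Q\<^sub>j\<close> of the summand units again sum to 1, so summing
  over \<open>j\<close> and \<open>l\<close> leaves \<open>\<Sum>\<^bsub>i \<noteq> k\<^esub> P\<^sub>i D P\<^sub>k\<close>. Distinct summand units are orthogonal,
  so \<open>P\<^sub>i D P\<^sub>k = P\<^sub>i [D, P\<^sub>k]\<close>, and they lie in \<open>A\<^sub>C\<close>, which is the complex span of \<open>A\<close>;
  bilinearity of \<open>(a, b) \<mapsto> a [D, b]\<close> puts every term in \<open>\<Omega>\<^sup>1\<^sub>D(A)\<close>.\<close>

lemma csc_add: "csc c (x + y) = csc c x + csc c y"
  by (simp add: csc_def vec_eq_iff distrib_left)

lemma csc_diff: "csc c (x - y) = csc c x - csc c y"
  by (simp add: csc_def vec_eq_iff right_diff_distrib)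

lemma csc_zero: "csc c 0 = 0"
  by (simp add: csc_def vec_eq_iff)

lemma csc_one: "csc 1 x = x"
  by (simp add: csc_def vec_eq_iff)

lemma csc_minus_one: "csc (-1) x = - x"
  by (simp add: csc_def vec_eq_iff)

lemma csc_csc: "csc c (csc d x) = csc (c * d) x"
  by (simp add: csc_def vec_eq_iff mult.assoc)

lemma csc_sum: "csc c (sum f I) = (\<Sum>i\<in>I. csc c (f i))"
  by (induction I rule: infinite_finite_induct) (auto simp: csc_add csc_zero)

lemma matrix_mul_csc_left: "csc c x ** y = csc c (x ** y)"
  by (simp add: csc_def matrix_matrix_mult_def vec_eq_iff sum_distrib_left mult.assoc)

lemma matrix_mul_csc_right: "x ** csc c y = csc c (x ** y)"
  by (simp add: csc_def matrix_matrix_mult_def vec_eq_iff sum_distrib_left mult_ac)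

lemma matrix_add_rdistrib: "(A + B) ** C = A ** C + B ** (C::'a::semiring_1^'n^'m)"
  by (vector matrix_matrix_mult_def sum.distrib[symmetric] field_simps)

lemma matrix_diff_ldistrib: "A ** (B - C) = A ** B - A ** (C::'a::ring_1^'n^'m)"
  by (simp add: matrix_matrix_mult_def vec_eq_iff sum_subtractf right_diff_distrib)

lemma matrix_diff_rdistrib: "(B - C) ** A = B ** A - C ** (A::'a::ring_1^'n^'m)"
  by (simp add: matrix_matrix_mult_def vec_eq_iff sum_subtractf left_diff_distrib)

lemma matrix_mul_sum_left: "sum f I ** (M::'a::semiring_1^'n^'n) = (\<Sum>i\<in>I. f i ** M)"
  by (induction I rule: infinite_finite_induct) (auto simp: matrix_add_rdistrib)

lemma matrix_mul_sum_right: "(M::'a::semiring_1^'n^'n) ** sum f I = (\<Sum>i\<in>I. M ** f i)"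
  by (induction I rule: infinite_finite_induct) (auto simp: matrix_add_ldistrib)

lemma adj_add: "adj (x + y) = adj x + adj y"
  by (simp add: adj_def vec_eq_iff)

lemma adj_diff: "adj (x - y) = adj x - adj y"
  by (simp add: adj_def vec_eq_iff)

lemma adj_zero: "adj 0 = 0"
  by (simp add: adj_def vec_eq_iff)

lemma adj_mat_1: "adj (mat 1) = mat 1"
  by (simp add: adj_def mat_def vec_eq_iff)

lemma adj_csc: "adj (csc c x) = csc (cnj c) (adj x)"
  by (simp add: adj_def csc_def vec_eq_iff)

lemma adj_matrix_mul: "adj (x ** y) = adj y ** adj x"
  by (simp add: adj_def matrix_matrix_mult_def vec_eq_iff mult.commute)

lemma adj_sum: "adj (sum f I) = (\<Sum>i\<in>I. adj (f i))"
  by (induction I rule: infinite_finite_induct) (auto simp: adj_add adj_zero)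

section \<open>One-forms\<close>

lemma sum_lessThan_add: "sum f {..<m + (n::nat)} = sum f {..<m} + (\<Sum>i<n. f (m + i))"
  by (induct n) (auto simp: add.assoc)

lemma Omega1_zero: "0 \<in> Omega1 D A"
  unfolding Omega1_def by (rule CollectI, rule exI[of _ 0]) auto

lemma Omega1_generator: "a \<in> A \<Longrightarrow> b \<in> A \<Longrightarrow> a ** (D ** b - b ** D) \<in> Omega1 D A"
  unfolding Omega1_def
  by (rule CollectI, rule exI[of _ 1], rule exI[of _ "\<lambda>_. 1"], rule exI[of _ "\<lambda>_. a"],
      rule exI[of _ "\<lambda>_. b"]) (simp add: csc_one)

lemma Omega1_add:
  assumes "x \<in> Omega1 D A" "y \<in> Omega1 D A"
  shows "x + y \<in> Omega1 D A"
proof -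
  obtain m :: nat and c a b where x: "x = (\<Sum>i<m. csc (c i) (a i ** (D ** b i - b i ** D)))"
    and ab: "\<forall>i<m. a i \<in> A \<and> b i \<in> A"
    using assms(1) unfolding Omega1_def by blast
  obtain m' :: nat and c' a' b' where y: "y = (\<Sum>i<m'. csc (c' i) (a' i ** (D ** b' i - b' i ** D)))"
    and ab': "\<forall>i<m'. a' i \<in> A \<and> b' i \<in> A"
    using assms(2) unfolding Omega1_def by blast
  define c'' where "c'' i = (if i < m then c i else c' (i - m))" for i
  define a'' where "a'' i = (if i < m then a i else a' (i - m))" for i
  define b'' where "b'' i = (if i < m then b i else b' (i - m))" for i
  have "x + y = (\<Sum>i<m + m'. csc (c'' i) (a'' i ** (D ** b'' i - b'' i ** D)))"
    unfolding sum_lessThan_add x y c''_def a''_def b''_def by simp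
  moreover have "\<forall>i<m + m'. a'' i \<in> A \<and> b'' i \<in> A"
    using ab ab' unfolding a''_def b''_def by auto
  ultimately show ?thesis
    unfolding Omega1_def by blast
qed

lemma Omega1_csc:
  assumes "x \<in> Omega1 D A"
  shows "csc d x \<in> Omega1 D A"
proof -
  obtain m :: nat and c a b where x: "x = (\<Sum>i<m. csc (c i) (a i ** (D ** b i - b i ** D)))"
    and ab: "\<forall>i<m. a i \<in> A \<and> b i \<in> A"
    using assms unfolding Omega1_def by blast
  have "csc d x = (\<Sum>i<m. csc (d * c i) (a i ** (D ** b i - b i ** D)))"
    unfolding x csc_sum csc_csc ..
  with ab show ?thesis
    unfolding Omega1_def mem_Collect_eq
    by (intro exI[of _ m] exI[of _ "\<lambda>i. d * c i"] exI[of _ a] exI[of _ b]) simp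
qed

lemma Omega1_sum: "(\<And>i. i \<in> I \<Longrightarrow> f i \<in> Omega1 D A) \<Longrightarrow> sum f I \<in> Omega1 D A"
  by (induction I rule: infinite_finite_induct) (auto simp: Omega1_zero Omega1_add)

section \<open>The complex span of A\<close>

inductive_set cspan :: "'n::finite cop set \<Rightarrow> 'n cop set" for A where
  zero: "0 \<in> cspan A"
| base: "a \<in> A \<Longrightarrow> a \<in> cspan A"
| add: "x \<in> cspan A \<Longrightarrow> y \<in> cspan A \<Longrightarrow> x + y \<in> cspan A"
| csc: "x \<in> cspan A \<Longrightarrow> csc c x \<in> cspan A"

lemma cspan_mult:
  assumes mult: "\<forall>a\<in>A. \<forall>b\<in>A. a ** b \<in> A"
    and "x \<in> cspan A" "y \<in> cspan A"
  shows "x ** y \<in> cspan A"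
  using assms(2)
proof induction
  case zero
  then show ?case by (simp add: cspan.zero)
next
  case (base a)
  show ?case using assms(3)
  proof induction
    case zero
    then show ?case by (simp add: cspan.zero)
  next
    case (base b)
    then show ?case using mult \<open>a \<in> A\<close> by (simp add: cspan.base)
  next
    case (add y1 y2)
    then show ?case by (simp add: matrix_add_ldistrib cspan.add)
  next
    case (csc y c)
    then show ?case by (simp add: matrix_mul_csc_right cspan.csc)
  qed
next
  case (add x1 x2)
  then show ?case by (simp add: matrix_add_rdistrib cspan.add)
next
  case (csc x c)
  then show ?case by (simp add: matrix_mul_csc_left cspan.csc)
qed

lemma cspan_adj:
  assumes "\<forall>a\<in>A. adj a \<in> A" "x \<in> cspan A"
  shows "adj x \<in> cspan A"
  using assms(2) by induction (use assms(1) in \<open>simp_all add: adj_zero adj_add adj_csc cspan.intros\<close>)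

lemma complex_star_subalg_cspan:
  assumes "real_star_subalg A"
  shows "complex_star_subalg (cspan A)"
  using assms cspan_mult cspan_adj cspan.zero cspan.add cspan.csc
  unfolding complex_star_subalg_def real_star_subalg_def by metis

lemma AC_subset_cspan: "real_star_subalg A \<Longrightarrow> AC A \<subseteq> cspan A"
  unfolding AC_def using complex_star_subalg_cspan cspan.base by blast

lemma complex_star_subalg_AC: "complex_star_subalg (AC A)"
  unfolding complex_star_subalg_def AC_def by blast

lemma subset_AC: "A \<subseteq> AC A"
  unfolding AC_def by auto

lemma Omega1_cspan_right:
  assumes "a \<in> A" "y \<in> cspan A"
  shows "a ** (D ** y - y ** D) \<in> Omega1 D A"
  using assms(2)
proof induction
  case zero
  then show ?case by (simp add: Omega1_zero)
next
  case (base b)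
  then show ?case using Omega1_generator assms(1) by blast
next
  case (add x y)
  have "D ** (x + y) - (x + y) ** D = (D ** x - x ** D) + (D ** y - y ** D)"
    by (simp add: matrix_add_ldistrib matrix_add_rdistrib)
  then have "a ** (D ** (x + y) - (x + y) ** D) = a ** (D ** x - x ** D) + a ** (D ** y - y ** D)"
    by (simp only: matrix_add_ldistrib)
  then show ?case using add Omega1_add by metis
next
  case (csc x c)
  have "a ** (D ** csc c x - csc c x ** D) = csc c (a ** (D ** x - x ** D))"
    by (simp only: matrix_mul_csc_left matrix_mul_csc_right csc_diff[symmetric])
  then show ?case using csc Omega1_csc by metis
qed

lemma Omega1_cspan:
  assumes "x \<in> cspan A" "y \<in> cspan A"
  shows "x ** (D ** y - y ** D) \<in> Omega1 D A"
  using assms(1)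
proof induction
  case zero
  then show ?case by (simp add: Omega1_zero)
next
  case (base a)
  then show ?case using Omega1_cspan_right assms(2) by blast
next
  case (add x1 x2)
  then show ?case by (simp only: matrix_add_rdistrib Omega1_add)
next
  case (csc x c)
  then show ?case by (simp only: matrix_mul_csc_left Omega1_csc)
qed

lemma Omega1_orthogonal_sandwich:
  assumes "P \<in> cspan A" "P' \<in> cspan A" "P ** P' = 0"
  shows "P ** D ** P' \<in> Omega1 D A"
proof -
  have "P ** D ** P' = P ** (D ** P' - P' ** D)"
    by (simp add: matrix_diff_ldistrib matrix_mul_assoc assms(3))
  then show ?thesis using Omega1_cspan[OF assms(1,2)] by simp
qed

section \<open>Minimal central projections\<close>

definition minimal_central_proj :: "'n::finite cop set \<Rightarrow> 'n cop \<Rightarrow> bool" where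
  "minimal_central_proj B P \<longleftrightarrow> central_proj B P \<and> P \<noteq> 0 \<and>
     (\<forall>Q. central_proj B Q \<and> Q ** P = Q \<longrightarrow> Q = 0 \<or> Q = P)"

lemma summand_units_eq: "summand_units A = {P. minimal_central_proj (AC A) P}"
  by (simp add: summand_units_def minimal_central_proj_def)

definition fixed_space :: "'n::finite cop \<Rightarrow> (complex^'n) set" where
  "fixed_space Q = {x. Q *v x = x}"

lemma subspace_fixed_space: "subspace (fixed_space Q)"
proof -
  have "Q *v (c *\<^sub>R x) = c *\<^sub>R (Q *v x)" for c x
    using matrix_vector_mul_linear[of Q] linear_iff by blast
  then show ?thesis unfolding fixed_space_def subspace_def
    by (auto simp: matrix_vector_right_distrib)
qed

locale unital_complex_star_subalg =
  fixes B :: "'n::finite cop set"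
  assumes subalg: "complex_star_subalg B"
    and one: "mat 1 \<in> B"
begin

lemma zero_mem: "0 \<in> B" and add_mem: "x \<in> B \<Longrightarrow> y \<in> B \<Longrightarrow> x + y \<in> B"
  and mult_mem: "x \<in> B \<Longrightarrow> y \<in> B \<Longrightarrow> x ** y \<in> B"
  and csc_mem: "x \<in> B \<Longrightarrow> csc c x \<in> B"
  using subalg unfolding complex_star_subalg_def by auto

lemma diff_mem: "x \<in> B \<Longrightarrow> y \<in> B \<Longrightarrow> x - y \<in> B"
  using add_mem[of x "csc (-1) y"] csc_mem[of y "-1"] by (simp add: csc_minus_one)

lemma sum_mem: "(\<And>i. i \<in> I \<Longrightarrow> f i \<in> B) \<Longrightarrow> sum f I \<in> B"
  by (induction I rule: infinite_finite_induct) (auto simp: zero_mem add_mem)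

abbreviation "cp \<equiv> central_proj B"
abbreviation "minimal_cp \<equiv> minimal_central_proj B"

lemma central_projD:
  assumes "cp P"
  shows "P \<in> B" "P ** P = P" "adj P = P" "\<And>a. a \<in> B \<Longrightarrow> P ** a = a ** P"
  using assms unfolding central_proj_def by auto

lemma central_proj_mult:
  assumes P: "cp P" and Q: "cp Q"
  shows "cp (P ** Q)"
proof -
  have PQ: "P ** Q = Q ** P" using central_projD(4)[OF P central_projD(1)[OF Q]] .
  have "(P ** Q) ** (P ** Q) = P ** (Q ** P) ** Q"
    by (simp only: matrix_mul_assoc)
  also have "\<dots> = (P ** P) ** (Q ** Q)"
    by (simp only: PQ[symmetric] matrix_mul_assoc)
  finally have "(P ** Q) ** (P ** Q) = P ** Q"
    by (simp only: central_projD(2)[OF P] central_projD(2)[OF Q])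
  moreover have "adj (P ** Q) = P ** Q"
    by (simp only: adj_matrix_mul central_projD(3)[OF P] central_projD(3)[OF Q] PQ)
  moreover have "P ** Q \<in> B"
    using mult_mem central_projD(1)[OF P] central_projD(1)[OF Q] by blast
  moreover have "(P ** Q) ** a = a ** (P ** Q)" if a: "a \<in> B" for a
  proof -
    have "(P ** Q) ** a = P ** (a ** Q)"
      by (simp only: matrix_mul_assoc[symmetric] central_projD(4)[OF Q a])
    also have "\<dots> = a ** (P ** Q)"
      by (simp only: matrix_mul_assoc central_projD(4)[OF P a])
    finally show ?thesis .
  qed
  ultimately show ?thesis
    unfolding central_proj_def by blast
qed

lemma minimal_central_proj_orthogonal:
  assumes "minimal_cp P" "minimal_cp P'" "P \<noteq> P'"
  shows "P ** P' = 0"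
proof -
  have P: "cp P" and P': "cp P'" using assms unfolding minimal_central_proj_def by auto
  have comm: "P' ** P = P ** P'" using central_projD(4)[OF P' central_projD(1)[OF P]] .
  have "(P ** P') ** P = P ** (P ** P')"
    by (simp only: matrix_mul_assoc[symmetric] comm)
  also have "\<dots> = P ** P'"
    by (simp only: matrix_mul_assoc central_projD(2)[OF P])
  finally have "(P ** P') ** P = P ** P'" .
  moreover have "(P ** P') ** P' = P ** P'"
    by (simp only: matrix_mul_assoc[symmetric] central_projD(2)[OF P'])
  ultimately have "P ** P' = 0 \<or> P ** P' = P" "P ** P' = 0 \<or> P ** P' = P'"
    using assms(1,2) central_proj_mult[OF P P'] unfolding minimal_central_proj_def by blast+
  then show ?thesis using assms(3) by auto
qed

lemma central_proj_below_eq_of_dim_le: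
  assumes P: "cp P" and Q: "cp Q" and QP: "Q ** P = Q"
    and dim: "dim (fixed_space P) \<le> dim (fixed_space Q)"
  shows "Q = P"
proof -
  have comm: "P ** Q = Q ** P" using central_projD(4)[OF P central_projD(1)[OF Q]] .
  have "fixed_space Q \<subseteq> fixed_space P"
  proof
    fix x assume "x \<in> fixed_space Q"
    then have Qx: "Q *v x = x" unfolding fixed_space_def by simp
    then have "P *v x = (P ** Q) *v x" by (metis matrix_vector_mul_assoc)
    also have "\<dots> = x" using comm QP Qx by simp
    finally show "x \<in> fixed_space P" unfolding fixed_space_def by simp
  qed
  then have eq: "fixed_space Q = fixed_space P"
    using subspace_dim_equal subspace_fixed_space dim by blast
  have "(Q ** P) *v y = P *v y" for y
  proof -
    have "P *v y \<in> fixed_space P"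
      using central_projD(2)[OF P] unfolding fixed_space_def by (simp add: matrix_vector_mul_assoc)
    then have "Q *v (P *v y) = P *v y"
      using eq unfolding fixed_space_def by blast
    then show ?thesis by (simp add: matrix_vector_mul_assoc)
  qed
  then show ?thesis using QP by (simp add: matrix_eq)
qed

lemma exists_minimal_central_proj_below:
  assumes T: "cp T" "T \<noteq> 0"
  shows "\<exists>P. minimal_cp P \<and> P ** T = P"
proof -
  define S where "S = {Q. cp Q \<and> Q \<noteq> 0 \<and> Q ** T = Q}"
  have "T \<in> S" using T unfolding S_def central_proj_def by auto
  \<comment> \<open>a projection of least rank in \<open>S\<close> is minimal\<close>
  then obtain P where P: "P \<in> S"
    and least: "\<And>Q. Q \<in> S \<Longrightarrow> dim (fixed_space P) \<le> dim (fixed_space Q)"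
    using ex_has_least_nat[of "\<lambda>Q. Q \<in> S" T "\<lambda>Q. dim (fixed_space Q)"] by blast
  have "minimal_cp P"
    unfolding minimal_central_proj_def
  proof (intro conjI allI impI)
    show "cp P" "P \<noteq> 0" using P unfolding S_def by auto
    fix Q assume Q: "cp Q \<and> Q ** P = Q"
    show "Q = 0 \<or> Q = P"
    proof (cases "Q = 0")
      case False
      moreover have "Q ** T = Q"
      proof -
        have "P ** T = P" using P unfolding S_def by simp
        then have "(Q ** P) ** T = Q ** P" by (simp add: matrix_mul_assoc[symmetric])
        then show ?thesis using Q by simp
      qed
      ultimately have "Q \<in> S" using Q unfolding S_def by auto
      then show ?thesis
        using central_proj_below_eq_of_dim_le[OF \<open>cp P\<close> _ _ least] Q by blast
    qed simp
  qed
  then show ?thesis using P unfolding S_def by blast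
qed

lemma sum_minimal_central_projs:
  assumes "finite {P. minimal_cp P}"
  shows "(\<Sum>P | minimal_cp P. P) = mat 1"
proof -
  define U where "U = {P. minimal_cp P}"
  define S where "S = (\<Sum>P\<in>U. P)"
  have U_cp: "cp P" if "P \<in> U" for P using that unfolding U_def minimal_central_proj_def by simp
  have PS: "P ** S = P" if "P \<in> U" for P
  proof -
    have "P ** S = P ** P + (\<Sum>P'\<in>U - {P}. P ** P')"
      unfolding S_def matrix_mul_sum_right using assms that U_def by (simp add: sum.remove)
    also have "(\<Sum>P'\<in>U - {P}. P ** P') = 0"
      by (rule sum.neutral) (use that minimal_central_proj_orthogonal in \<open>auto simp: U_def\<close>)
    finally show ?thesis using central_projD(2) U_cp that by simp
  qed
  have complement_cp: "cp (mat 1 - S)"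
    unfolding central_proj_def
  proof (intro conjI ballI)
    have "S \<in> B"
      unfolding S_def by (rule sum_mem) (use U_cp central_projD(1) in blast)
    then show "mat 1 - S \<in> B" using diff_mem one by blast
    show "(mat 1 - S) ** (mat 1 - S) = mat 1 - S"
      using PS by (simp add: matrix_diff_ldistrib matrix_diff_rdistrib S_def matrix_mul_sum_left)
    show "adj (mat 1 - S) = mat 1 - S"
      using U_cp by (simp add: adj_diff adj_mat_1 S_def adj_sum central_projD(3))
    fix a assume "a \<in> B"
    then have "S ** a = a ** S"
      unfolding S_def matrix_mul_sum_left matrix_mul_sum_right
      by (intro sum.cong refl) (use U_cp central_projD(4) \<open>a \<in> B\<close> in blast)
    then show "(mat 1 - S) ** a = a ** (mat 1 - S)"
      by (simp add: matrix_diff_ldistrib matrix_diff_rdistrib)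
  qed
  have "mat 1 - S = 0"
  proof (rule ccontr)
    assume "mat 1 - S \<noteq> 0"
    then obtain P where P: "minimal_cp P" "P ** (mat 1 - S) = P"
      using exists_minimal_central_proj_below complement_cp by blast
    then have "P ** (mat 1 - S) = 0"
      using PS[of P] by (simp add: U_def matrix_diff_ldistrib)
    then show False using P unfolding minimal_central_proj_def by simp
  qed
  then show ?thesis unfolding S_def U_def by simp
qed

end

lemma conjJ_add:
  assumes "\<And>x y. J (x + y) = J x + J y"
  shows "conjJ J (M + N) = conjJ J M + conjJ J N"
  unfolding conjJ_def matrix_def by (simp add: vec_eq_iff matrix_vector_mult_add_rdistrib assms)

lemma conjJ_sum:
  assumes "\<And>x y. J (x + y) = J x + J y"
  shows "conjJ J (sum f I) = (\<Sum>i\<in>I. conjJ J (f i))"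
proof -
  have "conjJ J 0 = 0"
    unfolding conjJ_def matrix_def using assms[of 0 0] by (simp add: vec_eq_iff)
  then show ?thesis
    by (induction I rule: infinite_finite_induct) (auto simp: conjJ_add assms)
qed

lemma conjJ_mat_1: "surj J \<Longrightarrow> conjJ J (mat 1) = mat 1"
  unfolding conjJ_def by (simp add: surj_f_inv_f matrix_id_mat_1[unfolded id_def])

lemma surj_if_square_scalar:
  fixes \<epsilon> :: complex
  assumes "\<forall>x. J (J x) = \<epsilon> *s x" "\<epsilon> \<noteq> 0"
  shows "surj J"
proof (rule surjI)
  fix y
  show "J (J (inverse \<epsilon> *s y)) = y"
    using assms by (simp add: vec_eq_iff)
qed

lemma D0_add_D2_eq:
  assumes "finite (summand_units A)"
    and "(\<Sum>P\<in>summand_units A. conjJ J P) = mat 1"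
  shows "D0 A J D + D2 A J D = (\<Sum>P\<in>summand_units A. \<Sum>P'\<in>summand_units A - {P}. P ** D ** P')"
proof -
  define U where "U = summand_units A"
  have blocks: "(\<Sum>j\<in>U. \<Sum>l\<in>U. Dblock J D i j k l) = i ** D ** k" for i k
  proof -
    have "(\<Sum>j\<in>U. \<Sum>l\<in>U. Dblock J D i j k l)
          = (\<Sum>j\<in>U. i ** conjJ J j ** D ** k ** (\<Sum>l\<in>U. conjJ J l))"
      unfolding Dblock_def matrix_mul_sum_right ..
    also have "\<dots> = (\<Sum>j\<in>U. i ** conjJ J j) ** D ** k"
      using assms(2) by (simp add: U_def matrix_mul_sum_left)
    also have "\<dots> = i ** D ** k"
      using assms(2) by (simp add: U_def matrix_mul_sum_right[symmetric])
    finally show ?thesis .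
  qed
  have "D0 A J D + D2 A J D = (\<Sum>i\<in>U. \<Sum>j\<in>U. \<Sum>k\<in>U-{i}.
          Dblock J D i j k j + (\<Sum>l\<in>U-{j}. Dblock J D i j k l))"
    unfolding D0_def D2_def U_def[symmetric] by (simp only: sum.distrib)
  also have "\<dots> = (\<Sum>i\<in>U. \<Sum>j\<in>U. \<Sum>k\<in>U-{i}. \<Sum>l\<in>U. Dblock J D i j k l)"
    using assms(1) by (simp add: U_def sum.remove)
  also have "\<dots> = (\<Sum>i\<in>U. \<Sum>k\<in>U-{i}. \<Sum>j\<in>U. \<Sum>l\<in>U. Dblock J D i j k l)"
    by (rule sum.cong[OF refl]) (rule sum.swap)
  also have "\<dots> = (\<Sum>i\<in>U. \<Sum>k\<in>U-{i}. i ** D ** k)"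
    by (simp only: blocks)
  finally show ?thesis unfolding U_def .
qed

theorem lemma6:
  fixes A :: "'n::finite cop set"
    and D :: "'n cop"
    and J :: "complex^'n \<Rightarrow> complex^'n"
    and \<epsilon> \<epsilon>' :: complex
  assumes "real_star_subalg A"
    and "adj D = D"
    and "antilinear_isometry J"
    and "\<epsilon> \<in> {1, -1}" and "\<epsilon>' \<in> {1, -1}"
    and "\<forall>x. J (J x) = \<epsilon> *s x"
    and "\<forall>x. J (D *v x) = \<epsilon>' *s (D *v J x)"
    and "\<forall>a\<in>A. \<forall>b\<in>A. \<forall>x. a *v (J (b *v (inv J x))) = J (b *v (inv J (a *v x)))"
  shows "D0 A J D + D2 A J D \<in> Omega1 D A"
proof (cases "finite (summand_units A)")
  case False
  \<comment> \<open>impossible, but then all the sums defining \<open>D\<^sub>0\<close> and \<open>D\<^sub>2\<close> are 0 by convention\<close>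
  then show ?thesis by (simp add: D0_def D2_def Omega1_zero)
next
  case finite: True
  interpret AC: unital_complex_star_subalg "AC A"
    using complex_star_subalg_AC subset_AC assms(1) unfolding real_star_subalg_def
    by unfold_locales blast+
  have additive: "\<And>x y. J (x + y) = J x + J y"
    using assms(3) unfolding antilinear_isometry_def by blast
  have "surj J"
    using surj_if_square_scalar[OF assms(6)] assms(4) by auto
  have "(\<Sum>P\<in>summand_units A. conjJ J P) = conjJ J (\<Sum>P\<in>summand_units A. P)"
    by (rule conjJ_sum[OF additive, symmetric])
  also have "\<dots> = mat 1"
    using AC.sum_minimal_central_projs finite conjJ_mat_1[OF \<open>surj J\<close>]
    by (simp add: summand_units_eq)
  finally have "(\<Sum>P\<in>summand_units A. conjJ J P) = mat 1" .
  then have "D0 A J D + D2 A J D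
      = (\<Sum>P\<in>summand_units A. \<Sum>P'\<in>summand_units A - {P}. P ** D ** P')"
    using D0_add_D2_eq finite by blast
  moreover have "P ** D ** P' \<in> Omega1 D A"
    if "P \<in> summand_units A" "P' \<in> summand_units A - {P}" for P P'
    using that Omega1_orthogonal_sandwich AC.minimal_central_proj_orthogonal
      AC_subset_cspan[OF assms(1)]
    unfolding summand_units_eq minimal_central_proj_def central_proj_def by blast
  ultimately show ?thesis by (auto intro!: Omega1_sum)
qed

end
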